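(* Let $f_i:\mathbb{R}^n\to(-\infty,+\infty]$ be proper, lower semicontinuous and prox-bounded with thresholds $\lambda_{f_i}>0$, $i=1,2$, and let $0<\lambda<\min\{\lambda_{f_1},\lambda_{f_2}\}$. Consider: (a) $\partial_p^\lambda f_1=\partial_p^\lambda f_2$; (b) $P_\lambda f_1=P_\lambda f_2$; (c) there is $c\in\mathbb{R}$ with $e_\lambda f_1=e_\lambda f_2+c$; (d) there is $c\in\mathbb{R}$ with $h_\lambda f_1=h_\lambda f_2+c$; (e) there is $c\in\mathbb{R}$ with $\overline{\operatorname{conv}}f_1=\overline{\operatorname{conv}}f_2+c$, provided $\operatorname{conv}f_i$ is proper for $i=1,2$. Then (a)$\Leftrightarrow$(b)$\Rightarrow$(c)$\Leftrightarrow$(d), and (a)$\Rightarrow$(e).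
   Context: $e_\lambda f(x):=\inf_y\{f(y)+\frac1{2\lambda}\|y-x\|^2\}$, $P_\lambda f(x):=\operatorname{argmin}_y\{f(y)+\frac1{2\lambda}\|y-x\|^2\}$; prox-bounded with threshold $\lambda_f=\sup\{\lambda>0:e_\lambda f(x)>-\infty\text{ for some }x\}$. $v\in\partial_p^\lambda f(x)$ iff $x\in\operatorname{dom}f$ and $f(y)\ge f(x)+\langle v,y-x\rangle-\frac1{2\lambda}\|y-x\|^2$ for all $y$. $h_\lambda f:=-e_\lambda(-e_\lambda f)$. $\operatorname{conv}f$ and $\overline{\operatorname{conv}}f$ are the convex hull and the lsc convex hull of $f$. *)

theory Defs
  imports "HOL-Analysis.Analysis" "HOL-Library.Extended_Real"
begin

definition proper_fn :: "('a \<Rightarrow> ereal) \<Rightarrow> bool" where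
  "proper_fn f \<longleftrightarrow> (\<forall>x. f x \<noteq> -\<infinity>) \<and> (\<exists>x. f x < \<infinity>)"

definition lsc_fn :: "('a::topological_space \<Rightarrow> ereal) \<Rightarrow> bool" where
  "lsc_fn f \<longleftrightarrow> (\<forall>x. f x \<le> Liminf (at x) f)"

definition dom_fn :: "('a \<Rightarrow> ereal) \<Rightarrow> 'a set" where
  "dom_fn f = {x. f x < \<infinity>}"

definition moreau_env :: "real \<Rightarrow> ('a::real_normed_vector \<Rightarrow> ereal) \<Rightarrow> 'a \<Rightarrow> ereal" where
  "moreau_env lam f x = (INF y. f y + ereal (1 / (2 * lam) * (norm (y - x))\<^sup>2))"

definition prox_map :: "real \<Rightarrow> ('a::real_normed_vector \<Rightarrow> ereal) \<Rightarrow> 'a \<Rightarrow> 'a set" where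
  "prox_map lam f x = {y. \<forall>z. f y + ereal (1 / (2 * lam) * (norm (y - x))\<^sup>2)
                              \<le> f z + ereal (1 / (2 * lam) * (norm (z - x))\<^sup>2)}"

definition prox_bounded :: "('a::real_normed_vector \<Rightarrow> ereal) \<Rightarrow> bool" where
  "prox_bounded f \<longleftrightarrow> (\<exists>lam>0. \<exists>x. moreau_env lam f x > -\<infinity>)"

definition prox_threshold :: "('a::real_normed_vector \<Rightarrow> ereal) \<Rightarrow> ereal" where
  "prox_threshold f = Sup {ereal lam | lam. lam > 0 \<and> (\<exists>x. moreau_env lam f x > -\<infinity>)}"

definition prox_subdiff :: "real \<Rightarrow> ('a::real_inner \<Rightarrow> ereal) \<Rightarrow> 'a \<Rightarrow> 'a set" where
  "prox_subdiff lam f x = {v. x \<in> dom_fn f \<and>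
     (\<forall>y. f y \<ge> f x + ereal (inner v (y - x) - 1 / (2 * lam) * (norm (y - x))\<^sup>2))}"

definition h_env :: "real \<Rightarrow> ('a::real_normed_vector \<Rightarrow> ereal) \<Rightarrow> 'a \<Rightarrow> ereal" where
  "h_env lam f = (\<lambda>x. - moreau_env lam (\<lambda>y. - moreau_env lam f y) x)"

definition convex_fn :: "('a::real_vector \<Rightarrow> ereal) \<Rightarrow> bool" where
  "convex_fn g \<longleftrightarrow> convex {(x, r::real). g x \<le> ereal r}"

definition conv_hull_fn :: "('a::real_vector \<Rightarrow> ereal) \<Rightarrow> 'a \<Rightarrow> ereal" where
  "conv_hull_fn f x = (SUP g \<in> {g. convex_fn g \<and> (\<forall>y. g y \<le> f y)}. g x)"

definition closed_conv_hull_fn :: "('a::real_normed_vector \<Rightarrow> ereal) \<Rightarrow> 'a \<Rightarrow> ereal" where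
  "closed_conv_hull_fn f x =
     (SUP g \<in> {g. convex_fn g \<and> lsc_fn g \<and> (\<forall>y. g y \<le> f y)}. g x)"

end

theory Submission
  imports Defs
begin

(* Writing P for the proximal map and e for the Moreau envelope:
   (a) <-> (b): x is a proximal point of z exactly when (z - x) / lam is a lam-proximal
   subgradient at x; expanding the square shows the two defining inequalities coincide.
   (b) -> (c): below the prox threshold the proximal objective is lsc and coercive, so proximal
   points exist, and any selection Y of P satisfies
   e x' <= e x + (|Y x - x'|^2 - |Y x - x|^2) / (2 lam),
   i.e. e - |.|^2 / (2 lam) is concave with supergradient -Y / lam.  Two functions with a common
   supergradient selection differ by a constant: sum the supergradient inequalities along a
   finely subdivided segment.
   (c) <-> (d): h <= f and e (h f) = e f, while e commutes with adding constants.
   (a) -> (e): from e f1 = e f2 + c, every affine minorant l of f1 yields the affine minorant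
   l - c of f2, because the envelope of l is l minus a constant, attained at an explicit point.
   The closed convex hull is the supremum of the affine minorants (separation from the closed
   convex epigraph), so the hulls differ by c as well. *)

section \<open>Proximal points and proximal subgradients\<close>

lemma norm_diff_sq:
  fixes a b :: "'a::real_inner"
  shows "(norm (a - b))\<^sup>2 = (norm a)\<^sup>2 - 2 * inner a b + (norm b)\<^sup>2"
  by (simp add: power2_norm_eq_inner inner_diff_left inner_diff_right inner_commute)

lemma prox_map_iff_prox_subdiff:
  fixes f :: "'a::real_inner \<Rightarrow> ereal"
  assumes proper: "proper_fn f" and lam: "lam > 0"
  shows "x \<in> prox_map lam f z \<longleftrightarrow> (1/lam) *\<^sub>R (z - x) \<in> prox_subdiff lam f x"
proof (cases "f x")
  case PInf
  obtain y where "f y < \<infinity>" using proper unfolding proper_fn_def by auto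
  then have "x \<notin> prox_map lam f z" using PInf unfolding prox_map_def by force
  moreover have "x \<notin> dom_fn f" using PInf unfolding dom_fn_def by auto
  ultimately show ?thesis unfolding prox_subdiff_def by auto
next
  case MInf
  then show ?thesis using proper unfolding proper_fn_def by auto
next
  case (real a)
  have identity: "1/(2*lam) * (norm (y - z))\<^sup>2 - 1/(2*lam) * (norm (x - z))\<^sup>2
      = 1/(2*lam) * (norm (y - x))\<^sup>2 - inner ((1/lam) *\<^sub>R (z - x)) (y - x)" for y
  proof -
    have "(norm (y - z))\<^sup>2 = (norm (y - x))\<^sup>2 - 2 * inner (y - x) (z - x) + (norm (x - z))\<^sup>2"
      using norm_diff_sq[of "y - x" "z - x"] by (simp add: norm_minus_commute)
    moreover have "inner ((1/lam) *\<^sub>R (z - x)) (y - x) = inner (y - x) (z - x) / lam"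
      by (simp add: inner_commute)
    ultimately show ?thesis using lam by (simp add: field_simps)
  qed
  have "f x + ereal (1/(2*lam) * (norm (x - z))\<^sup>2) \<le> f y + ereal (1/(2*lam) * (norm (y - z))\<^sup>2)
      \<longleftrightarrow> f x + ereal (inner ((1/lam) *\<^sub>R (z - x)) (y - x) - 1/(2*lam) * (norm (y - x))\<^sup>2) \<le> f y" for y
  proof (cases "f y")
    case (real r)
    have "a + 1/(2*lam) * (norm (x - z))\<^sup>2 \<le> r + 1/(2*lam) * (norm (y - z))\<^sup>2
        \<longleftrightarrow> a + (inner ((1/lam) *\<^sub>R (z - x)) (y - x) - 1/(2*lam) * (norm (y - x))\<^sup>2) \<le> r"
      using identity[of y] by (intro iffI; linarith)
    then show ?thesis using real \<open>f x = ereal a\<close> by simp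
  next
    case MInf
    then show ?thesis using proper unfolding proper_fn_def by auto
  qed (simp add: real)
  moreover have "x \<in> dom_fn f" using real unfolding dom_fn_def by auto
  ultimately show ?thesis unfolding prox_map_def prox_subdiff_def by auto
qed

lemma prox_subdiff_eq_iff_prox_map_eq:
  fixes f1 f2 :: "'a::real_inner \<Rightarrow> ereal"
  assumes "proper_fn f1" "proper_fn f2" "lam > 0"
  shows "prox_subdiff lam f1 = prox_subdiff lam f2 \<longleftrightarrow> prox_map lam f1 = prox_map lam f2"
proof
  assume subdiff_eq: "prox_subdiff lam f1 = prox_subdiff lam f2"
  show "prox_map lam f1 = prox_map lam f2"
  proof (intro ext set_eqI)
    fix z x :: 'a
    show "x \<in> prox_map lam f1 z \<longleftrightarrow> x \<in> prox_map lam f2 z"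
      using prox_map_iff_prox_subdiff[OF assms(1,3), of x z]
        prox_map_iff_prox_subdiff[OF assms(2,3), of x z] subdiff_eq
      by simp
  qed
next
  assume prox_eq: "prox_map lam f1 = prox_map lam f2"
  show "prox_subdiff lam f1 = prox_subdiff lam f2"
  proof (intro ext set_eqI)
    fix x v :: 'a
    have v: "(1/lam) *\<^sub>R ((x + lam *\<^sub>R v) - x) = v" using \<open>lam > 0\<close> by simp
    show "v \<in> prox_subdiff lam f1 x \<longleftrightarrow> v \<in> prox_subdiff lam f2 x"
      using prox_map_iff_prox_subdiff[OF assms(1,3), of x "x + lam *\<^sub>R v", unfolded v]
        prox_map_iff_prox_subdiff[OF assms(2,3), of x "x + lam *\<^sub>R v", unfolded v] prox_eq
      by simp
  qed
qed

section \<open>Lower semicontinuity\<close>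

lemma lsc_fn_eventually_greater:
  assumes "lsc_fn f" "t < f x"
  shows "eventually (\<lambda>y. t < f y) (nhds x)"
proof -
  have "t < Liminf (at x) f" using assms unfolding lsc_fn_def by (meson less_le_trans)
  then have "eventually (\<lambda>y. t < f y) (at x)" by (rule less_LiminfD)
  then show ?thesis using \<open>t < f x\<close> by (simp add: eventually_nhds_conv_at)
qed

lemma lsc_fn_add_continuous:
  fixes f :: "'a::topological_space \<Rightarrow> ereal"
  assumes "lsc_fn f" "continuous_on UNIV g"
  shows "lsc_fn (\<lambda>x. f x + ereal (g x))"
  unfolding lsc_fn_def le_Liminf_iff
proof (intro allI impI)
  fix x t assume "t < f x + ereal (g x)"
  then obtain s where s: "t < ereal s" "ereal s < f x + ereal (g x)" using ereal_dense2 by blast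
  then have "ereal (s - g x) < f x" by (cases "f x") auto
  then obtain a where a: "ereal (s - g x) < ereal a" "ereal a < f x" using ereal_dense2 by blast
  have "eventually (\<lambda>y. ereal a < f y) (at x)"
    using lsc_fn_eventually_greater[OF assms(1) a(2)] by (simp add: eventually_nhds_conv_at)
  moreover have "(g \<longlongrightarrow> g x) (at x)" using assms(2) by (simp add: continuous_on_def)
  then have "eventually (\<lambda>y. s - a < g y) (at x)" using a(1) by (intro order_tendstoD(1)) auto
  ultimately show "eventually (\<lambda>y. t < f y + ereal (g y)) (at x)"
  proof eventually_elim
    case (elim y)
    then have "ereal s < f y + ereal (g y)" by (cases "f y") auto
    with s(1) show ?case by (rule less_trans)
  qed
qed

lemma lsc_fn_continuous:
  assumes "continuous_on UNIV g"
  shows "lsc_fn (\<lambda>x. ereal (g x))"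
  unfolding lsc_fn_def le_Liminf_iff
proof (intro allI impI)
  fix x y assume "y < ereal (g x)"
  have "(g \<longlongrightarrow> g x) (at x)" using assms by (simp add: continuous_on_def)
  then have "((\<lambda>z. ereal (g z)) \<longlongrightarrow> ereal (g x)) (at x)" by (rule tendsto_ereal)
  then show "eventually (\<lambda>z. y < ereal (g z)) (at x)"
    using \<open>y < ereal (g x)\<close> by (rule order_tendstoD(1))
qed

lemma lsc_fn_closed_epigraph:
  assumes "lsc_fn f"
  shows "closed {(x, r::real). f x \<le> ereal r}"
proof -
  have "open {(x, r::real). ereal r < f x}"
  proof (rule topological_space_class.openI, clarify)
    fix x r assume "ereal r < f x"
    then obtain s where s: "r < s" "ereal s < f x" using ereal_dense2 by force
    obtain U where U: "open U" "x \<in> U" "\<forall>y\<in>U. ereal s < f y"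
      using lsc_fn_eventually_greater[OF assms s(2)] unfolding eventually_nhds by blast
    show "\<exists>T. open T \<and> (x, r) \<in> T \<and> T \<subseteq> {(x, r). ereal r < f x}"
    proof (intro exI conjI)
      show "open (U \<times> {..<s})" using U(1) by (intro open_Times) auto
      show "(x, r) \<in> U \<times> {..<s}" using U(2) s(1) by simp
      show "U \<times> {..<s} \<subseteq> {(x, r). ereal r < f x}"
        using U(3) by (auto intro: order.strict_trans[of _ "ereal s"])
    qed
  qed
  moreover have "- {(x, r::real). f x \<le> ereal r} = {(x, r). ereal r < f x}" by auto
  ultimately show ?thesis by (simp add: closed_def)
qed

lemma lsc_fn_closed_sublevel:
  fixes f :: "'a::metric_space \<Rightarrow> ereal"
  assumes "lsc_fn f"
  shows "closed {x. f x \<le> ereal t}"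
proof -
  have "closed ((\<lambda>x. (x, t)) -` {(x, r). f x \<le> ereal r})"
    by (rule continuous_closed_vimage[OF lsc_fn_closed_epigraph[OF assms]])
      (intro continuous_Pair continuous_ident continuous_const)
  then show ?thesis by simp
qed

lemma coercive_sublevel_bounded:
  fixes \<phi> :: "'a::real_normed_vector \<Rightarrow> ereal"
  assumes coercive: "\<And>y. ereal (c + \<alpha> * (norm (y - z))\<^sup>2) \<le> \<phi> y" and "\<alpha> > 0"
  shows "bounded {y. \<phi> y \<le> ereal t}"
proof -
  have "{y. \<phi> y \<le> ereal t} \<subseteq> cball z (1 + (t - c) / \<alpha>)"
  proof
    fix y assume "y \<in> {y. \<phi> y \<le> ereal t}"
    then have "\<phi> y \<le> ereal t" by simp
    with coercive[of y] have "ereal (c + \<alpha> * (norm (y - z))\<^sup>2) \<le> ereal t" by (rule order_trans)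
    then have "(norm (y - z))\<^sup>2 \<le> (t - c) / \<alpha>"
      using \<open>\<alpha> > 0\<close> by (simp add: pos_le_divide_eq mult.commute)
    moreover have "norm (y - z) \<le> 1 + (norm (y - z))\<^sup>2"
      using zero_le_power2[of "norm (y - z) - 1/2"] by (simp add: power2_eq_square algebra_simps)
    ultimately show "y \<in> cball z (1 + (t - c) / \<alpha>)"
      by (simp add: dist_norm norm_minus_commute)
  qed
  then show ?thesis by (rule bounded_subset[OF bounded_cball])
qed

lemma lsc_fn_coercive_attains_min:
  fixes \<phi> :: "'a::euclidean_space \<Rightarrow> ereal"
  assumes lsc: "lsc_fn \<phi>" and finite_somewhere: "\<phi> y0 < \<infinity>"
    and coercive: "\<And>y. ereal (c + \<alpha> * (norm (y - z))\<^sup>2) \<le> \<phi> y" and "\<alpha> > 0"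
  obtains x where "\<And>y. \<phi> x \<le> \<phi> y"
proof -
  define m where "m = (INF y. \<phi> y)"
  have "ereal c \<le> m"
    unfolding m_def
  proof (rule INF_greatest)
    fix y
    have "ereal c \<le> ereal (c + \<alpha> * (norm (y - z))\<^sup>2)" using \<open>\<alpha> > 0\<close> by simp
    then show "ereal c \<le> \<phi> y" using coercive by (rule order_trans)
  qed
  moreover have "m \<le> \<phi> y0" unfolding m_def by (rule INF_lower) simp
  then have "m < \<infinity>" using finite_somewhere by (rule le_less_trans)
  ultimately obtain mr where mr: "m = ereal mr" by (cases m) auto
  define S where "S n = {y. \<phi> y \<le> ereal (mr + 1 / Suc n)}" for n :: nat
  have "compact (S n)" for n
    unfolding S_def compact_eq_bounded_closed
    using coercive_sublevel_bounded[OF coercive \<open>\<alpha> > 0\<close>] lsc_fn_closed_sublevel[OF lsc] by blast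
  moreover have "S n \<noteq> {}" for n
  proof -
    have "m < ereal (mr + 1 / Suc n)" using mr by simp
    then obtain y where "\<phi> y < ereal (mr + 1 / Suc n)" unfolding m_def by (auto simp: INF_less_iff)
    then show ?thesis unfolding S_def by (auto dest: less_imp_le)
  qed
  moreover have "S n \<subseteq> S k" if "k \<le> n" for k n
  proof
    fix y assume "y \<in> S n"
    then have "\<phi> y \<le> ereal (mr + 1 / Suc n)" by (simp add: S_def)
    also have "\<dots> \<le> ereal (mr + 1 / Suc k)" using that by (simp add: frac_le)
    finally show "y \<in> S k" by (simp add: S_def)
  qed
  ultimately have "\<Inter>(range S) \<noteq> {}" by (rule compact_nest)
  then obtain x where x: "\<And>n. x \<in> S n" by blast
  have x_le_m: "\<phi> x \<le> m"
  proof (rule ereal_le_epsilon2)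
    fix e :: real assume "0 < e"
    then obtain n where n: "1 / real (Suc n) < e" by (rule nat_approx_posE)
    have "\<phi> x \<le> ereal (mr + 1 / Suc n)" using x[of n] by (simp add: S_def)
    also have "\<dots> \<le> m + ereal e" using n mr by simp
    finally show "\<phi> x \<le> m + ereal e" .
  qed
  show thesis
  proof (rule that)
    fix y
    have "m \<le> \<phi> y" unfolding m_def by (rule INF_lower) simp
    with x_le_m show "\<phi> x \<le> \<phi> y" by (rule order_trans)
  qed
qed

section \<open>Existence of proximal points below the threshold\<close>

lemma prox_threshold_quadratic_minorant:
  fixes f :: "'a::real_normed_vector \<Rightarrow> ereal"
  assumes "ereal lam < prox_threshold f"
  obtains mu x0 c where "lam < mu" "\<And>y. ereal c \<le> f y + ereal (1/(2*mu) * (norm (y - x0))\<^sup>2)"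
proof -
  obtain mu x0 where mu: "lam < mu" and finite: "moreau_env mu f x0 > -\<infinity>"
    using assms unfolding prox_threshold_def by (auto simp: less_Sup_iff)
  obtain c where c: "ereal c \<le> moreau_env mu f x0"
    using finite by (cases "moreau_env mu f x0") auto
  have "ereal c \<le> f y + ereal (1/(2*mu) * (norm (y - x0))\<^sup>2)" for y
  proof -
    have "moreau_env mu f x0 \<le> f y + ereal (1/(2*mu) * (norm (y - x0))\<^sup>2)"
      unfolding moreau_env_def by (rule INF_lower) simp
    with c show ?thesis by (rule order_trans)
  qed
  with mu show thesis by (rule that)
qed

lemma power2_norm_add_le:
  fixes a b :: "'a::real_normed_vector"
  assumes "e > 0"
  shows "(norm (a + b))\<^sup>2 \<le> (1 + e) * (norm a)\<^sup>2 + (1 + 1/e) * (norm b)\<^sup>2"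
proof -
  have "2 * norm a * norm b \<le> e * (norm a)\<^sup>2 + (norm b)\<^sup>2 / e"
  proof -
    have "0 \<le> (e * norm a - norm b)\<^sup>2" by simp
    then show ?thesis using assms by (simp add: field_simps power2_eq_square)
  qed
  moreover have "(norm (a + b))\<^sup>2 \<le> (norm a + norm b)\<^sup>2"
    by (simp add: norm_triangle_ineq power_mono)
  ultimately show ?thesis by (simp add: power2_eq_square algebra_simps)
qed

lemma prox_objective_coercive:
  fixes f :: "'a::real_normed_vector \<Rightarrow> ereal"
  assumes "0 < lam" "lam < mu"
    and minorant: "\<And>y. ereal c \<le> f y + ereal (1/(2*mu) * (norm (y - x0))\<^sup>2)"
  obtains \<alpha> d where "\<alpha> > 0"
    "\<And>y. ereal (d + \<alpha> * (norm (y - z))\<^sup>2) \<le> f y + ereal (1/(2*lam) * (norm (y - z))\<^sup>2)"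
proof -
  define \<beta> \<gamma> where "\<beta> = 1/(2*mu)" and "\<gamma> = 1/(2*lam)"
  have "0 < \<beta>" "\<beta> < \<gamma>" using assms(1,2) by (simp_all add: \<beta>_def \<gamma>_def frac_less2)
  define e where "e = (\<gamma> - \<beta>) / (2*\<beta>)"
  define \<alpha> where "\<alpha> = (\<gamma> - \<beta>) / 2"
  define K where "K = \<beta> * (1 + 1/e) * (norm (z - x0))\<^sup>2"
  have "e > 0" "\<alpha> > 0" using \<open>0 < \<beta>\<close> \<open>\<beta> < \<gamma>\<close> by (simp_all add: e_def \<alpha>_def)
  \<comment> \<open>Since \<beta> < \<gamma>, the quadratic centred at x0 is dominated by part of the one centred at z.\<close>
  have \<beta>_bound: "\<beta> * (norm (y - x0))\<^sup>2 \<le> (\<gamma> - \<alpha>) * (norm (y - z))\<^sup>2 + K" for y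
  proof -
    have "\<beta> * (norm (y - x0))\<^sup>2 \<le> \<beta> * ((1 + e) * (norm (y - z))\<^sup>2 + (1 + 1/e) * (norm (z - x0))\<^sup>2)"
      using power2_norm_add_le[OF \<open>e > 0\<close>, of "y - z" "z - x0"] \<open>0 < \<beta>\<close>
      by (intro mult_left_mono) simp_all
    also have "\<dots> = \<beta> * (1 + e) * (norm (y - z))\<^sup>2 + K" unfolding K_def by (simp add: algebra_simps)
    also have "\<beta> * (1 + e) = \<gamma> - \<alpha>" using \<open>0 < \<beta>\<close> by (simp add: e_def \<alpha>_def field_simps)
    finally show ?thesis .
  qed
  have "ereal (c - K + \<alpha> * (norm (y - z))\<^sup>2) \<le> f y + ereal (\<gamma> * (norm (y - z))\<^sup>2)" for y
    using minorant[of y] \<beta>_bound[of y] unfolding \<beta>_def[symmetric]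
    by (cases "f y") (auto simp: algebra_simps)
  with \<open>\<alpha> > 0\<close> show thesis using that unfolding \<gamma>_def by blast
qed

lemma prox_map_nonempty:
  fixes f :: "'a::euclidean_space \<Rightarrow> ereal"
  assumes "proper_fn f" "lsc_fn f" "0 < lam" "ereal lam < prox_threshold f"
  shows "prox_map lam f z \<noteq> {}"
proof -
  obtain mu x0 c where "lam < mu" "\<And>y. ereal c \<le> f y + ereal (1/(2*mu) * (norm (y - x0))\<^sup>2)"
    using prox_threshold_quadratic_minorant[OF assms(4)] by blast
  then obtain \<alpha> d where coercive: "\<alpha> > 0"
    "\<And>y. ereal (d + \<alpha> * (norm (y - z))\<^sup>2) \<le> f y + ereal (1/(2*lam) * (norm (y - z))\<^sup>2)"
    using prox_objective_coercive[OF assms(3)] by blast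
  have lsc: "lsc_fn (\<lambda>y. f y + ereal (1/(2*lam) * (norm (y - z))\<^sup>2))"
    using assms(2) by (rule lsc_fn_add_continuous) (intro continuous_intros)
  obtain y0 where "f y0 < \<infinity>" using assms(1) unfolding proper_fn_def by blast
  then have "f y0 + ereal (1/(2*lam) * (norm (y0 - z))\<^sup>2) < \<infinity>" by simp
  from lsc_fn_coercive_attains_min[OF lsc this coercive(2) coercive(1)] obtain x
    where "\<And>y. f x + ereal (1/(2*lam) * (norm (x - z))\<^sup>2) \<le> f y + ereal (1/(2*lam) * (norm (y - z))\<^sup>2)"
    by blast
  then show ?thesis unfolding prox_map_def by blast
qed

lemma moreau_env_at_prox:
  assumes "y \<in> prox_map lam f x"
  shows "moreau_env lam f x = f y + ereal (1/(2*lam) * (norm (y - x))\<^sup>2)"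
  unfolding moreau_env_def
proof (rule antisym)
  show "(INF w. f w + ereal (1/(2*lam) * (norm (w - x))\<^sup>2)) \<le> f y + ereal (1/(2*lam) * (norm (y - x))\<^sup>2)"
    by (rule INF_lower) simp
  show "f y + ereal (1/(2*lam) * (norm (y - x))\<^sup>2) \<le> (INF w. f w + ereal (1/(2*lam) * (norm (w - x))\<^sup>2))"
    using assms unfolding prox_map_def by (auto intro: INF_greatest)
qed

lemma prox_point_finite:
  assumes "proper_fn f" "y \<in> prox_map lam f x"
  shows "\<bar>f y\<bar> \<noteq> \<infinity>"
proof -
  obtain w where "f w < \<infinity>" using assms(1) unfolding proper_fn_def by blast
  then have "f y \<noteq> \<infinity>" using assms(2) unfolding prox_map_def by force
  moreover have "f y \<noteq> -\<infinity>" using assms(1) unfolding proper_fn_def by blast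
  ultimately show ?thesis by auto
qed

lemma moreau_env_finite:
  fixes f :: "'a::euclidean_space \<Rightarrow> ereal"
  assumes "proper_fn f" "lsc_fn f" "0 < lam" "ereal lam < prox_threshold f"
  shows "\<bar>moreau_env lam f x\<bar> \<noteq> \<infinity>"
proof -
  obtain y where "y \<in> prox_map lam f x" using prox_map_nonempty[OF assms] by blast
  then show ?thesis
    using moreau_env_at_prox prox_point_finite[OF assms(1)] by fastforce
qed

section \<open>Equal proximal maps give shifted envelopes\<close>

lemma moreau_env_le_at_prox:
  assumes "y \<in> prox_map lam f x"
  shows "moreau_env lam f x'
    \<le> moreau_env lam f x + ereal (1/(2*lam) * ((norm (y - x'))\<^sup>2 - (norm (y - x))\<^sup>2))"
proof -
  have "moreau_env lam f x' \<le> f y + ereal (1/(2*lam) * (norm (y - x'))\<^sup>2)"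
    unfolding moreau_env_def by (rule INF_lower) simp
  also have "\<dots> = moreau_env lam f x + ereal (1/(2*lam) * ((norm (y - x'))\<^sup>2 - (norm (y - x))\<^sup>2))"
    unfolding moreau_env_at_prox[OF assms] by (cases "f y") (simp_all add: algebra_simps)
  finally show ?thesis .
qed

lemma common_supergradients_diff_le:
  fixes g1 g2 :: "'a::real_inner \<Rightarrow> real" and s :: "'a \<Rightarrow> 'a"
  assumes g1: "\<And>x x'. g1 x' \<le> g1 x + inner (s x) (x' - x)"
    and g2: "\<And>x x'. g2 x' \<le> g2 x + inner (s x) (x' - x)"
    and "N > 0"
  shows "(g1 b - g2 b) - (g1 a - g2 a) \<le> inner (s a - s b) (b - a) / real N"
proof -
  define p where "p k = a + (real k / real N) *\<^sub>R (b - a)" for k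
  define D where "D k = g1 (p k) - g2 (p k)" for k
  define \<sigma> where "\<sigma> k = inner (s (p k)) (b - a)" for k
  have step: "p (Suc k) - p k = (1 / real N) *\<^sub>R (b - a)" for k
    by (simp add: p_def add_divide_distrib scaleR_add_left)
  have "D (Suc k) - D k \<le> (\<sigma> k - \<sigma> (Suc k)) / real N" for k
  proof -
    have "g1 (p (Suc k)) - g1 (p k) \<le> inner (s (p k)) (p (Suc k) - p k)"
      using g1 by (simp add: algebra_simps)
    moreover have "g2 (p k) - g2 (p (Suc k)) \<le> - inner (s (p (Suc k))) (p (Suc k) - p k)"
      using g2[where x = "p (Suc k)" and x' = "p k"] by (simp add: inner_diff_right algebra_simps)
    ultimately show ?thesis unfolding D_def \<sigma>_def step by (simp add: diff_divide_distrib)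
  qed
  then have "(\<Sum>k<N. D (Suc k) - D k) \<le> (\<Sum>k<N. (\<sigma> k - \<sigma> (Suc k)) / real N)"
    by (rule sum_mono)
  then have "D N - D 0 \<le> (\<sigma> 0 - \<sigma> N) / real N"
    by (simp add: sum_lessThan_telescope sum_lessThan_telescope' sum_divide_distrib[symmetric])
  moreover have "p 0 = a" "p N = b" using \<open>N > 0\<close> by (simp_all add: p_def)
  ultimately show ?thesis unfolding D_def \<sigma>_def by (simp add: inner_diff_left)
qed

lemma common_supergradients_diff_eq:
  fixes g1 g2 :: "'a::real_inner \<Rightarrow> real" and s :: "'a \<Rightarrow> 'a"
  assumes g1: "\<And>x x'. g1 x' \<le> g1 x + inner (s x) (x' - x)"
    and g2: "\<And>x x'. g2 x' \<le> g2 x + inner (s x) (x' - x)"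
  shows "g1 b - g2 b = g1 a - g2 a"
proof -
  have nonpos: "d \<le> 0" if "\<And>N. N > 0 \<Longrightarrow> d \<le> C / real N" for d C :: real
  proof (rule LIMSEQ_le_const)
    show "(\<lambda>N. C / real N) \<longlonglongrightarrow> 0" by (rule lim_const_over_n)
    show "\<exists>N. \<forall>n\<ge>N. d \<le> C / real n" using that by (intro exI[of _ 1]) simp
  qed
  have "(g1 b - g2 b) - (g1 a - g2 a) \<le> 0"
    by (rule nonpos) (rule common_supergradients_diff_le[OF g1 g2])
  moreover have "(g2 b - g1 b) - (g2 a - g1 a) \<le> 0"
    by (rule nonpos) (rule common_supergradients_diff_le[OF g2 g1])
  ultimately show ?thesis by linarith
qed

lemma prox_map_eq_imp_moreau_env_shift:
  fixes f1 f2 :: "'a::euclidean_space \<Rightarrow> ereal"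
  assumes f1: "proper_fn f1" "lsc_fn f1" "ereal lam < prox_threshold f1"
    and f2: "proper_fn f2" "lsc_fn f2" "ereal lam < prox_threshold f2"
    and "0 < lam" and prox_eq: "prox_map lam f1 = prox_map lam f2"
  shows "\<exists>c. \<forall>x. moreau_env lam f1 x = moreau_env lam f2 x + ereal c"
proof -
  have "\<forall>x. \<exists>y. y \<in> prox_map lam f1 x"
    using prox_map_nonempty[OF f1(1,2) \<open>0 < lam\<close> f1(3)] by blast
  then obtain Y where Y: "\<And>x. Y x \<in> prox_map lam f1 x" by metis
  define g where "g f x = real_of_ereal (moreau_env lam f x) - (norm x)\<^sup>2 / (2*lam)"
    for f :: "'a \<Rightarrow> ereal" and x
  have env: "moreau_env lam f x = ereal (g f x + (norm x)\<^sup>2 / (2*lam))"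
    if "proper_fn f" "lsc_fn f" "ereal lam < prox_threshold f" for f :: "'a \<Rightarrow> ereal" and x
    using moreau_env_finite[OF that(1,2) \<open>0 < lam\<close> that(3), of x] unfolding g_def
    by (cases "moreau_env lam f x") auto
  have supergradient: "g f x' \<le> g f x + inner (- (1/lam) *\<^sub>R Y x) (x' - x)"
    if "proper_fn f" "lsc_fn f" "ereal lam < prox_threshold f" "\<And>x. Y x \<in> prox_map lam f x"
    for f :: "'a \<Rightarrow> ereal" and x x'
  proof -
    have "1/(2*lam) * ((norm (Y x - x'))\<^sup>2 - (norm (Y x - x))\<^sup>2)
        = (norm x')\<^sup>2 / (2*lam) - (norm x)\<^sup>2 / (2*lam) + inner (- (1/lam) *\<^sub>R Y x) (x' - x)"
      using \<open>0 < lam\<close> by (simp add: norm_diff_sq inner_diff_right field_simps)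
    moreover have "moreau_env lam f x'
        \<le> moreau_env lam f x + ereal (1/(2*lam) * ((norm (Y x - x'))\<^sup>2 - (norm (Y x - x))\<^sup>2))"
      by (rule moreau_env_le_at_prox[OF that(4)])
    ultimately show ?thesis using env[OF that(1-3), of x] env[OF that(1-3), of x'] by simp
  qed
  have Y2: "\<And>x. Y x \<in> prox_map lam f2 x" using Y prox_eq by simp
  have "g f1 x - g f2 x = g f1 0 - g f2 0" for x
    by (rule common_supergradients_diff_eq[OF supergradient[OF f1 Y] supergradient[OF f2 Y2]])
  then have "moreau_env lam f1 x = moreau_env lam f2 x + ereal (g f1 0 - g f2 0)" for x
    using env[OF f1] env[OF f2] by (simp add: algebra_simps)
  then show ?thesis by blast
qed

section \<open>The double envelope h\<close>

lemma INF_add_ereal_const: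
  fixes g :: "'b \<Rightarrow> ereal"
  shows "(INF y. g y + ereal d) = (INF y. g y) + ereal d"
proof -
  have "continuous (at_right (INF y. g y)) (\<lambda>x. x + ereal d)"
    unfolding continuous_within
    by (intro tendsto_add_ereal_general1 tendsto_ident_at tendsto_const) simp
  then show ?thesis
    by (subst continuous_at_Inf_mono[where f = "\<lambda>x. x + ereal d"])
      (auto simp: mono_def image_comp add_right_mono)
qed

lemma moreau_env_add_const:
  "moreau_env lam (\<lambda>y. g y + ereal c) x = moreau_env lam g x + ereal c"
proof -
  have "(\<lambda>y. g y + ereal c + ereal (1/(2*lam) * (norm (y - x))\<^sup>2))
      = (\<lambda>y. g y + ereal (1/(2*lam) * (norm (y - x))\<^sup>2) + ereal c)"
    by (simp add: add_ac)
  then show ?thesis unfolding moreau_env_def by (simp only:) (rule INF_add_ereal_const)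
qed

lemma h_env_shift_of_moreau_env_shift:
  assumes "\<And>x. moreau_env lam f1 x = moreau_env lam f2 x + ereal c"
  shows "h_env lam f1 x = h_env lam f2 x + ereal c"
proof -
  have "(\<lambda>y. - moreau_env lam f1 y) = (\<lambda>y. - moreau_env lam f2 y + ereal (- c))"
  proof
    fix y show "- moreau_env lam f1 y = - moreau_env lam f2 y + ereal (- c)"
      using assms[of y] by (cases "moreau_env lam f2 y") auto
  qed
  then have "moreau_env lam (\<lambda>y. - moreau_env lam f1 y) x
      = moreau_env lam (\<lambda>y. - moreau_env lam f2 y) x + ereal (- c)"
    by (simp add: moreau_env_add_const)
  then show ?thesis unfolding h_env_def
    by (cases "moreau_env lam (\<lambda>y. - moreau_env lam f2 y) x") auto
qed

lemma h_env_le: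
  assumes finite: "\<And>x. \<bar>moreau_env lam f x\<bar> \<noteq> \<infinity>"
  shows "h_env lam f x \<le> f x"
proof -
  have "- f x \<le> - moreau_env lam f w + ereal (1/(2*lam) * (norm (w - x))\<^sup>2)" for w
  proof -
    have "moreau_env lam f w \<le> f x + ereal (1/(2*lam) * (norm (x - w))\<^sup>2)"
      unfolding moreau_env_def by (rule INF_lower) simp
    then show ?thesis using finite[of w]
      by (cases "f x"; cases "moreau_env lam f w") (auto simp: norm_minus_commute)
  qed
  then have "- f x \<le> moreau_env lam (\<lambda>y. - moreau_env lam f y) x"
    unfolding moreau_env_def by (rule INF_greatest)
  then show ?thesis unfolding h_env_def by (simp add: ereal_uminus_le_reorder)
qed

lemma moreau_env_h_env:
  assumes finite: "\<And>x. \<bar>moreau_env lam f x\<bar> \<noteq> \<infinity>"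
  shows "moreau_env lam (h_env lam f) z = moreau_env lam f z"
proof (rule antisym)
  show "moreau_env lam (h_env lam f) z \<le> moreau_env lam f z"
    unfolding moreau_env_def by (rule INF_mono') (simp add: add_right_mono h_env_le[OF finite])
next
  have "moreau_env lam f z \<le> h_env lam f x + ereal (1/(2*lam) * (norm (x - z))\<^sup>2)" for x
  proof -
    have "moreau_env lam (\<lambda>y. - moreau_env lam f y) x
        \<le> - moreau_env lam f z + ereal (1/(2*lam) * (norm (z - x))\<^sup>2)"
      unfolding moreau_env_def by (rule INF_lower) simp
    then show ?thesis using finite[of z] unfolding h_env_def
      by (cases "moreau_env lam (\<lambda>y. - moreau_env lam f y) x"; cases "moreau_env lam f z")
        (auto simp: norm_minus_commute)
  qed
  then show "moreau_env lam f z \<le> moreau_env lam (h_env lam f) z"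
    unfolding moreau_env_def[of lam "h_env lam f"] by (rule INF_greatest)
qed

lemma moreau_env_shift_iff_h_env_shift:
  assumes finite1: "\<And>x. \<bar>moreau_env lam f1 x\<bar> \<noteq> \<infinity>"
    and finite2: "\<And>x. \<bar>moreau_env lam f2 x\<bar> \<noteq> \<infinity>"
  shows "(\<exists>c. \<forall>x. moreau_env lam f1 x = moreau_env lam f2 x + ereal c) \<longleftrightarrow>
         (\<exists>c. \<forall>x. h_env lam f1 x = h_env lam f2 x + ereal c)"
proof
  assume "\<exists>c. \<forall>x. moreau_env lam f1 x = moreau_env lam f2 x + ereal c"
  then show "\<exists>c. \<forall>x. h_env lam f1 x = h_env lam f2 x + ereal c"
    using h_env_shift_of_moreau_env_shift by blast
next
  assume "\<exists>c. \<forall>x. h_env lam f1 x = h_env lam f2 x + ereal c"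
  then obtain c where "h_env lam f1 = (\<lambda>y. h_env lam f2 y + ereal c)" by blast
  then have "moreau_env lam f1 x = moreau_env lam f2 x + ereal c" for x
    using moreau_env_h_env[OF finite1, of x] moreau_env_h_env[OF finite2, of x]
    by (simp add: moreau_env_add_const)
  then show "\<exists>c. \<forall>x. moreau_env lam f1 x = moreau_env lam f2 x + ereal c" by blast
qed

section \<open>Affine minorants and closed convex hulls\<close>

lemma convex_fn_affine: "convex_fn (\<lambda>z. ereal (inner v z + \<beta>))"
proof -
  have "{(x, r::real). ereal (inner v x + \<beta>) \<le> ereal r} = {p. inner (v, -1::real) p \<le> -\<beta>}"
    by auto
  then show ?thesis unfolding convex_fn_def using convex_halfspace_le by metis
qed

lemma conv_hull_fn_convex: "convex_fn (conv_hull_fn f)"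
proof -
  let ?A = "{g. convex_fn g \<and> (\<forall>y. g y \<le> f y)}"
  have "{(x, r::real). conv_hull_fn f x \<le> ereal r} = (\<Inter>g\<in>?A. {(x, r). g x \<le> ereal r})"
    unfolding conv_hull_fn_def by (auto simp: SUP_le_iff)
  moreover have "convex (\<Inter>g\<in>?A. {(x, r::real). g x \<le> ereal r})"
    by (rule convex_INT) (simp add: convex_fn_def)
  ultimately show ?thesis unfolding convex_fn_def by simp
qed

lemma conv_hull_fn_le: "conv_hull_fn f y \<le> f y"
  unfolding conv_hull_fn_def by (rule SUP_least) auto

lemma epigraph_vertex_not_in_rel_interior:
  fixes K :: "'a::euclidean_space \<Rightarrow> ereal"
  assumes "K z = ereal k"
  shows "(z, k) \<notin> rel_interior {(x, r::real). K x \<le> ereal r}"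
proof
  define S where "S = {(x, r::real). K x \<le> ereal r}"
  assume "(z, k) \<in> rel_interior {(x, r::real). K x \<le> ereal r}"
  then obtain e where e: "e > 0" "ball (z, k) e \<inter> affine hull S \<subseteq> S"
    unfolding mem_rel_interior_ball S_def by blast
  have "(z, k) \<in> S" "(z, k + 1) \<in> S" using assms by (simp_all add: S_def)
  then have "(1 + e/2) *\<^sub>R (z, k) + (- e/2) *\<^sub>R (z, k + 1) \<in> affine hull S"
    by (intro mem_affine[OF affine_affine_hull]) (auto intro: hull_inc)
  moreover have "(1 + e/2) *\<^sub>R (z, k) + (- e/2) *\<^sub>R (z, k + 1) = (z, k - e/2)"
    by (simp add: algebra_simps)
  moreover have "(z, k - e/2) \<in> ball (z, k) e" using e(1) by (simp add: dist_Pair_Pair dist_real_def)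
  ultimately have "(z, k - e/2) \<in> S" using e(2) by auto
  then show False using assms e(1) by (simp add: S_def)
qed

lemma convex_fn_proper_affine_minorant:
  fixes K :: "'a::euclidean_space \<Rightarrow> ereal"
  assumes "convex_fn K" "proper_fn K"
  obtains v \<beta> where "\<And>y. ereal (inner v y + \<beta>) \<le> K y"
proof -
  define S where "S = {(x, r::real). K x \<le> ereal r}"
  have "convex S" using assms(1) unfolding convex_fn_def S_def .
  have K_not_MInf: "K y \<noteq> -\<infinity>" for y using assms(2) unfolding proper_fn_def by auto
  obtain y1 where "K y1 < \<infinity>" using assms(2) unfolding proper_fn_def by blast
  then obtain r1 where "K y1 = ereal r1" using K_not_MInf[of y1] by (cases "K y1") auto
  then have "(y1, r1) \<in> S" by (simp add: S_def)
  then have "S \<noteq> {}" by blast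
  then obtain z s where zs: "(z, s) \<in> rel_interior S"
    using rel_interior_eq_empty[OF \<open>convex S\<close>] by auto
  then have "K z \<le> ereal s" using rel_interior_subset by (auto simp: S_def)
  then obtain k where k: "K z = ereal k" "k \<le> s" using K_not_MInf[of z] by (cases "K z") auto
  then have "(z, k) \<in> S" by (simp add: S_def)
  moreover have "(z, k) \<notin> rel_interior S"
    unfolding S_def by (rule epigraph_vertex_not_in_rel_interior[of K, OF k(1)])
  ultimately obtain a where a: "\<And>p. p \<in> S \<Longrightarrow> a \<bullet> (z, k) \<le> a \<bullet> p"
    "\<And>p. p \<in> rel_interior S \<Longrightarrow> a \<bullet> (z, k) < a \<bullet> p"
    using supporting_hyperplane_rel_boundary[OF \<open>convex S\<close>] by metis
  obtain av \<alpha> where av: "a = (av, \<alpha>)" by (cases a)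
  \<comment> \<open>The supporting hyperplane at (z, K z) is not vertical: it separates (z, s) strictly.\<close>
  have "\<alpha> * k < \<alpha> * s" using a(2)[OF zs] av by simp
  with \<open>k \<le> s\<close> have "\<alpha> > 0" by (smt (verit) mult_left_mono_neg)
  have "ereal (inner (- (1/\<alpha>) *\<^sub>R av) y + (k + inner av z / \<alpha>)) \<le> K y" for y
  proof (cases "K y")
    case (real r)
    then have "inner av z + \<alpha> * k \<le> inner av y + \<alpha> * r"
      using a(1)[of "(y, r)"] av by (simp add: S_def)
    then have "k + (inner av z - inner av y) / \<alpha> \<le> r" using \<open>\<alpha> > 0\<close> by (simp add: field_simps)
    then show ?thesis using real by (simp add: diff_divide_distrib)
  qed (use K_not_MInf in auto)
  then show thesis by (rule that)
qed

lemma lsc_convex_epigraph_separation: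
  fixes G :: "'a::euclidean_space \<Rightarrow> ereal"
  assumes "convex_fn G" "lsc_fn G" "G y1 < \<infinity>" "ereal t < G y0"
  obtains a \<alpha> b where "inner a y0 + \<alpha> * t < b" "\<alpha> \<ge> 0"
    "\<And>x r. G x \<le> ereal r \<Longrightarrow> b < inner a x + \<alpha> * r"
proof -
  define S where "S = {(x, r::real). G x \<le> ereal r}"
  have "convex S" "closed S" "(y0, t) \<notin> S"
    using assms(1,4) lsc_fn_closed_epigraph[OF assms(2)] unfolding convex_fn_def S_def by auto
  then obtain p b where p: "inner p (y0, t) < b" "\<forall>q\<in>S. b < inner p q"
    using separating_hyperplane_closed_point by blast
  obtain a \<alpha> where a: "p = (a, \<alpha>)" by (cases p)
  have sep: "b < inner a x + \<alpha> * r" if "G x \<le> ereal r" for x r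
    using p(2) that unfolding a S_def by auto
  obtain r1 where r1: "G y1 \<le> ereal r1" using assms(3) by (cases "G y1") auto
  have "inner a y0 + \<alpha> * t < b" using p(1) a by simp
  \<comment> \<open>Epigraphs extend upwards, so the separating normal cannot point downwards.\<close>
  moreover have "\<alpha> \<ge> 0"
  proof (rule ccontr)
    assume "\<not> \<alpha> \<ge> 0"
    define r where "r = max r1 ((inner a y1 - b) / (- \<alpha>))"
    have "G y1 \<le> ereal r" using r1 by (simp add: r_def max.coboundedI1)
    then have "b < inner a y1 + \<alpha> * r" by (rule sep)
    moreover have "(inner a y1 - b) / (- \<alpha>) \<le> r" unfolding r_def by (rule max.cobounded2)
    then have "inner a y1 - b \<le> r * (- \<alpha>)"
      using \<open>\<not> \<alpha> \<ge> 0\<close> by (subst (asm) pos_divide_le_eq) auto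
    ultimately show False by (simp add: algebra_simps)
  qed
  ultimately show thesis using sep by (rule that)
qed

lemma affine_minorant_tilt:
  fixes f :: "'a::real_inner \<Rightarrow> ereal"
  assumes vertical: "\<And>y. f y < \<infinity> \<Longrightarrow> b < inner a y" and "inner a y0 < b"
    and minorant: "\<And>y. ereal (inner v0 y + b0) \<le> f y"
  obtains v \<beta> where "\<And>y. ereal (inner v y + \<beta>) \<le> f y" "t < inner v y0 + \<beta>"
proof
  define \<mu> where "\<mu> = (\<bar>t - (inner v0 y0 + b0)\<bar> + 1) / (b - inner a y0)"
  have "\<mu> \<ge> 0" and \<mu>: "\<mu> * (b - inner a y0) = \<bar>t - (inner v0 y0 + b0)\<bar> + 1"
    using \<open>inner a y0 < b\<close> by (simp_all add: \<mu>_def)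
  show "ereal (inner (v0 - \<mu> *\<^sub>R a) y + (b0 + \<mu> * b)) \<le> f y" for y
  proof (cases "f y < \<infinity>")
    case True
    then have "\<mu> * (b - inner a y) \<le> 0"
      using vertical[OF True] \<open>\<mu> \<ge> 0\<close> by (simp add: mult_nonneg_nonpos)
    then have "ereal (inner (v0 - \<mu> *\<^sub>R a) y + (b0 + \<mu> * b)) \<le> ereal (inner v0 y + b0)"
      by (simp add: inner_diff_left algebra_simps)
    then show ?thesis using minorant by (rule order_trans)
  qed simp
  show "t < inner (v0 - \<mu> *\<^sub>R a) y0 + (b0 + \<mu> * b)"
    using \<mu> by (simp add: inner_diff_left algebra_simps)
qed

lemma affine_minorant_above_lsc_convex_minorant:
  fixes G f :: "'a::euclidean_space \<Rightarrow> ereal"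
  assumes "convex_fn G" "lsc_fn G" and G_le: "\<And>y. G y \<le> f y" and "f y1 < \<infinity>"
    and minorant: "\<And>y. ereal (inner v0 y + b0) \<le> f y" and "ereal t < G y0"
  obtains v \<beta> where "\<And>y. ereal (inner v y + \<beta>) \<le> f y" "t < inner v y0 + \<beta>"
proof -
  have "G y1 < \<infinity>" using G_le[of y1] \<open>f y1 < \<infinity>\<close> by (rule le_less_trans)
  obtain a \<alpha> b where y0: "inner a y0 + \<alpha> * t < b" and "\<alpha> \<ge> 0"
    and sep: "\<And>x r. G x \<le> ereal r \<Longrightarrow> b < inner a x + \<alpha> * r"
    using lsc_convex_epigraph_separation[OF assms(1,2) \<open>G y1 < \<infinity>\<close> \<open>ereal t < G y0\<close>] by blast
  have sep_f: "b < inner a y + \<alpha> * r" if "f y = ereal r" for y r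
    using G_le[of y] that by (intro sep) simp
  have f_not_MInf: "f y \<noteq> -\<infinity>" for y using minorant[of y] by auto
  show thesis
  proof (cases "\<alpha> > 0")
    case True
    show thesis
    proof (rule that)
      show "ereal (inner (- (1/\<alpha>) *\<^sub>R a) y + b / \<alpha>) \<le> f y" for y
      proof (cases "f y")
        case (real r)
        then have "(b - inner a y) / \<alpha> \<le> r"
          using sep_f[OF real] True by (simp add: pos_divide_le_eq mult.commute)
        then show ?thesis using real by (simp add: diff_divide_distrib)
      qed (use f_not_MInf in auto)
      show "t < inner (- (1/\<alpha>) *\<^sub>R a) y0 + b / \<alpha>"
        using y0 True by (simp add: field_simps)
    qed
  next
    case False
    \<comment> \<open>A vertical hyperplane, with dom f on one side and y0 on the other.\<close>
    with \<open>\<alpha> \<ge> 0\<close> have "\<alpha> = 0" by simp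
    have "b < inner a y" if "f y < \<infinity>" for y
      using that f_not_MInf[of y] sep_f \<open>\<alpha> = 0\<close> by (cases "f y") auto
    moreover have "inner a y0 < b" using y0 \<open>\<alpha> = 0\<close> by simp
    ultimately show thesis using minorant that by (rule affine_minorant_tilt)
  qed
qed

lemma affine_minorant_transfer:
  fixes f1 f2 :: "'a::real_inner \<Rightarrow> ereal"
  assumes "lam > 0" and env_shift: "\<And>x. moreau_env lam f1 x = moreau_env lam f2 x + ereal c"
    and minorant: "\<And>y. ereal (inner v y + \<beta>) \<le> f1 y"
  shows "ereal (inner v y + (\<beta> - c)) \<le> f2 y"
proof -
  \<comment> \<open>The envelope of the affine minorant at x is attained at y = x - lam v.\<close>
  define x where "x = y + lam *\<^sub>R v"
  have "ereal (inner v x + \<beta> - lam / 2 * (norm v)\<^sup>2) \<le> moreau_env lam f1 x"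
    unfolding moreau_env_def
  proof (rule INF_greatest)
    fix z
    have "(norm ((z - x) - (- lam *\<^sub>R v)))\<^sup>2
        = (norm (z - x))\<^sup>2 + 2 * lam * inner v (z - x) + lam\<^sup>2 * (norm v)\<^sup>2"
      unfolding norm_diff_sq by (simp add: power_mult_distrib inner_commute)
    then have "0 \<le> (norm (z - x))\<^sup>2 + 2 * lam * inner v (z - x) + lam\<^sup>2 * (norm v)\<^sup>2"
      by (metis zero_le_power2)
    then have "inner v x + \<beta> - lam / 2 * (norm v)\<^sup>2
        \<le> inner v z + \<beta> + 1/(2*lam) * (norm (z - x))\<^sup>2"
      using \<open>lam > 0\<close> by (simp add: inner_diff_right power2_eq_square field_simps)
    then have "ereal (inner v x + \<beta> - lam / 2 * (norm v)\<^sup>2)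
        \<le> ereal (inner v z + \<beta>) + ereal (1/(2*lam) * (norm (z - x))\<^sup>2)"
      by simp
    also have "\<dots> \<le> f1 z + ereal (1/(2*lam) * (norm (z - x))\<^sup>2)"
      using minorant by (rule add_right_mono)
    finally show "ereal (inner v x + \<beta> - lam / 2 * (norm v)\<^sup>2)
        \<le> f1 z + ereal (1/(2*lam) * (norm (z - x))\<^sup>2)" .
  qed
  also have "\<dots> = moreau_env lam f2 x + ereal c" by (rule env_shift)
  also have "\<dots> \<le> f2 y + ereal (lam / 2 * (norm v)\<^sup>2) + ereal c"
  proof -
    have "moreau_env lam f2 x \<le> f2 y + ereal (1/(2*lam) * (norm (y - x))\<^sup>2)"
      unfolding moreau_env_def by (rule INF_lower) simp
    moreover have "1/(2*lam) * (norm (y - x))\<^sup>2 = lam / 2 * (norm v)\<^sup>2"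
      using \<open>lam > 0\<close> by (simp add: x_def power2_eq_square)
    ultimately show ?thesis by (metis add_right_mono)
  qed
  finally have "ereal (inner v x + \<beta> - lam / 2 * (norm v)\<^sup>2)
      \<le> f2 y + ereal (lam / 2 * (norm v)\<^sup>2 + c)"
    by (simp add: add.assoc)
  moreover have "inner v x = inner v y + lam * (norm v)\<^sup>2"
    by (simp add: x_def inner_add_right power2_norm_eq_inner)
  ultimately show ?thesis by (cases "f2 y") (simp_all add: algebra_simps)
qed

lemma closed_conv_hull_fn_le_shift:
  fixes f1 f2 :: "'a::euclidean_space \<Rightarrow> ereal"
  assumes "lam > 0" "proper_fn f1" "proper_fn (conv_hull_fn f1)"
    and env_shift: "\<And>x. moreau_env lam f1 x = moreau_env lam f2 x + ereal c"
  shows "closed_conv_hull_fn f1 y \<le> closed_conv_hull_fn f2 y + ereal c"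
  unfolding closed_conv_hull_fn_def[of f1]
proof (rule SUP_least)
  fix G assume "G \<in> {g. convex_fn g \<and> lsc_fn g \<and> (\<forall>y. g y \<le> f1 y)}"
  then have G: "convex_fn G" "lsc_fn G" "\<And>y. G y \<le> f1 y" by auto
  obtain v0 b0 where "\<And>z. ereal (inner v0 z + b0) \<le> conv_hull_fn f1 z"
    using convex_fn_proper_affine_minorant[OF conv_hull_fn_convex assms(3)] by blast
  then have minorant: "ereal (inner v0 z + b0) \<le> f1 z" for z
    using conv_hull_fn_le by (rule order_trans)
  obtain y1 where "f1 y1 < \<infinity>" using assms(2) unfolding proper_fn_def by blast
  show "G y \<le> closed_conv_hull_fn f2 y + ereal c"
  proof (rule ccontr)
    assume "\<not> G y \<le> closed_conv_hull_fn f2 y + ereal c"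
    then have "closed_conv_hull_fn f2 y + ereal c < G y" by simp
    then obtain t where t: "closed_conv_hull_fn f2 y + ereal c < ereal t" "ereal t < G y"
      using ereal_dense2 by blast
    obtain v \<beta> where v: "\<And>z. ereal (inner v z + \<beta>) \<le> f1 z" "t < inner v y + \<beta>"
      using affine_minorant_above_lsc_convex_minorant[OF G \<open>f1 y1 < \<infinity>\<close> minorant t(2)] by blast
    have "convex_fn (\<lambda>z. ereal (inner v z + (\<beta> - c)))" by (rule convex_fn_affine)
    moreover have "lsc_fn (\<lambda>z. ereal (inner v z + (\<beta> - c)))"
      by (rule lsc_fn_continuous) (intro continuous_intros)
    moreover have "\<forall>z. ereal (inner v z + (\<beta> - c)) \<le> f2 z"
      using affine_minorant_transfer[OF \<open>lam > 0\<close> env_shift v(1)] by blast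
    ultimately have "ereal (inner v y + (\<beta> - c)) \<le> closed_conv_hull_fn f2 y"
      unfolding closed_conv_hull_fn_def
      by (intro SUP_upper2[of "\<lambda>z. ereal (inner v z + (\<beta> - c))"]) auto
    then have "ereal (inner v y + \<beta>) \<le> closed_conv_hull_fn f2 y + ereal c"
      by (cases "closed_conv_hull_fn f2 y") auto
    then have "ereal (inner v y + \<beta>) < ereal t" using t(1) by (rule le_less_trans)
    then show False using v(2) by simp
  qed
qed

lemma closed_conv_hull_fn_shift:
  fixes f1 f2 :: "'a::euclidean_space \<Rightarrow> ereal"
  assumes "lam > 0" "proper_fn f1" "proper_fn f2"
    and "proper_fn (conv_hull_fn f1)" "proper_fn (conv_hull_fn f2)"
    and env_shift: "\<And>x. moreau_env lam f1 x = moreau_env lam f2 x + ereal c"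
    and finite2: "\<And>x. \<bar>moreau_env lam f2 x\<bar> \<noteq> \<infinity>"
  shows "closed_conv_hull_fn f1 x = closed_conv_hull_fn f2 x + ereal c"
proof -
  have "moreau_env lam f2 x = moreau_env lam f1 x + ereal (- c)" for x
    using env_shift[of x] finite2[of x] by (cases "moreau_env lam f2 x") auto
  then have "closed_conv_hull_fn f2 x \<le> closed_conv_hull_fn f1 x + ereal (- c)"
    by (rule closed_conv_hull_fn_le_shift[OF assms(1,3,5)])
  moreover have "closed_conv_hull_fn f1 x \<le> closed_conv_hull_fn f2 x + ereal c"
    by (rule closed_conv_hull_fn_le_shift[OF assms(1,2,4) env_shift])
  ultimately show ?thesis
    by (cases "closed_conv_hull_fn f1 x"; cases "closed_conv_hull_fn f2 x") auto
qed

theorem mainTheorem11: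
  fixes f1 f2 :: "'a::euclidean_space \<Rightarrow> ereal" and lam :: real
  assumes "proper_fn f1" "lsc_fn f1" "prox_bounded f1" "prox_threshold f1 > 0"
      and "proper_fn f2" "lsc_fn f2" "prox_bounded f2" "prox_threshold f2 > 0"
      and "0 < lam" "ereal lam < min (prox_threshold f1) (prox_threshold f2)"
  shows "(prox_subdiff lam f1 = prox_subdiff lam f2 \<longleftrightarrow> prox_map lam f1 = prox_map lam f2)
    \<and> (prox_map lam f1 = prox_map lam f2 \<longrightarrow>
         (\<exists>c::real. \<forall>x. moreau_env lam f1 x = moreau_env lam f2 x + ereal c))
    \<and> ((\<exists>c::real. \<forall>x. moreau_env lam f1 x = moreau_env lam f2 x + ereal c) \<longleftrightarrow>
         (\<exists>c::real. \<forall>x. h_env lam f1 x = h_env lam f2 x + ereal c))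
    \<and> (proper_fn (conv_hull_fn f1) \<and> proper_fn (conv_hull_fn f2) \<longrightarrow>
         prox_subdiff lam f1 = prox_subdiff lam f2 \<longrightarrow>
         (\<exists>c::real. \<forall>x. closed_conv_hull_fn f1 x = closed_conv_hull_fn f2 x + ereal c))"
proof -
  \<comment> \<open>prox_bounded and positivity of the thresholds are implied by 0 < lam < thresholds.\<close>
  have threshold1: "ereal lam < prox_threshold f1" and threshold2: "ereal lam < prox_threshold f2"
    using assms(10) by auto
  have finite2: "\<And>x. \<bar>moreau_env lam f2 x\<bar> \<noteq> \<infinity>"
    by (rule moreau_env_finite[OF assms(5,6,9) threshold2])
  have a_iff_b: "prox_subdiff lam f1 = prox_subdiff lam f2 \<longleftrightarrow> prox_map lam f1 = prox_map lam f2"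
    by (rule prox_subdiff_eq_iff_prox_map_eq[OF assms(1,5,9)])
  have b_imp_c: "prox_map lam f1 = prox_map lam f2 \<Longrightarrow>
      \<exists>c. \<forall>x. moreau_env lam f1 x = moreau_env lam f2 x + ereal c"
    by (rule prox_map_eq_imp_moreau_env_shift
        [OF assms(1,2) threshold1 assms(5,6) threshold2 assms(9)])
  have c_iff_d: "(\<exists>c. \<forall>x. moreau_env lam f1 x = moreau_env lam f2 x + ereal c) \<longleftrightarrow>
      (\<exists>c. \<forall>x. h_env lam f1 x = h_env lam f2 x + ereal c)"
    by (rule moreau_env_shift_iff_h_env_shift
        [OF moreau_env_finite[OF assms(1,2,9) threshold1] finite2])
  have a_imp_e: "\<exists>c. \<forall>x. closed_conv_hull_fn f1 x = closed_conv_hull_fn f2 x + ereal c"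
    if conv_proper: "proper_fn (conv_hull_fn f1)" "proper_fn (conv_hull_fn f2)"
      and subdiff_eq: "prox_subdiff lam f1 = prox_subdiff lam f2"
  proof -
    obtain c where "\<And>x. moreau_env lam f1 x = moreau_env lam f2 x + ereal c"
      using a_iff_b b_imp_c subdiff_eq by blast
    then show ?thesis
      using closed_conv_hull_fn_shift[OF assms(9,1,5) conv_proper _ finite2] by blast
  qed
  show ?thesis using a_iff_b b_imp_c c_iff_d a_imp_e by blast
qed

end
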